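(* Assume the demand is i.i.d. with pmf $P_X$. Let $b\in\mathcal B$ be a constant-distribution policy that is invariant for the initial battery distribution $\theta_1$, with $S_1\sim\theta_1$ independent of $X_1\sim P_X$, $W_1=S_1-X_1$ and $Y_1\sim b(\cdot\mid W_1)$. Then $I(W_1;Y_1)=I(W_1;X_1)$.
   Context: $\mathcal X=\{0,\dots,m_x\}$, $\mathcal Y=\{0,\dots,m_y\}$, $\mathcal S=\{0,\dots,m_s\}$ with $m_x\le m_y$; $\mathcal W=\{s-x\}$; $\mathcal Y_\circ(w)=\{y\in\mathcal Y:w+y\in\mathcal S\}$; $\mathcal B$ the conditional pmfs $b(y\mid w)$ with $b(\mathcal Y_\circ(w)\mid w)=1$. Demand $X_t$ i.i.d. $\sim P_X$ independent of $S_1$. The constant-distribution policy $b$ draws $Y_t\sim b(\cdot\mid W_t)$, $W_t=S_t-X_t$, $S_{t+1}=S_t+Y_t-X_t$. With $\theta_t(s)=P(S_t=s\mid Y^{t-1}=y^{t-1})$ and $\xi_t(w)=P(W_t=w\mid Y^{t-1}=y^{t-1})$, $b$ is invariant for $\theta_1$ if $\theta_t=\theta_1$ and $\xi_t=\xi_1$ for all $t$, where $\xi_1(w)=\sum_{(x,s):s-x=w}P_X(x)\theta_1(s)$. *)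

theory Defs
  imports Complex_Main
begin

text \<open>Alphabets: X = {0..mx}, Y = {0..my}, S = {0..ms} (as nat sets); W = {s - x} (as int set).\<close>

definition Wset :: "nat \<Rightarrow> nat \<Rightarrow> int set" where
  "Wset mx ms = {int s - int x | s x. s \<le> ms \<and> x \<le> mx}"

definition Yo :: "nat \<Rightarrow> nat \<Rightarrow> int \<Rightarrow> nat set" where
  "Yo my ms w = {y. y \<le> my \<and> w + int y \<in> int ` {0..ms}}"

definition is_pmf_on :: "('a \<Rightarrow> real) \<Rightarrow> 'a set \<Rightarrow> bool" where
  "is_pmf_on p A \<longleftrightarrow> (\<forall>a\<in>A. 0 \<le> p a) \<and> sum p A = 1"

definition Bset :: "nat \<Rightarrow> nat \<Rightarrow> nat \<Rightarrow> (int \<Rightarrow> nat \<Rightarrow> real) set" where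
  "Bset mx my ms = {b. \<forall>w\<in>Wset mx ms. is_pmf_on (b w) {0..my} \<and> sum (b w) (Yo my ms w) = 1}"

text \<open>joint_SY mx ms PX th1 b n ys s = P(S_{n+1} = s, Y_1 = ys 1, ..., Y_n = ys n)
  for the process S_1 ~ th1, X_t iid ~ PX, W_t = S_t - X_t, Y_t ~ b(.|W_t),
  S_{t+1} = W_t + Y_t.\<close>
primrec joint_SY :: "nat \<Rightarrow> nat \<Rightarrow> (nat \<Rightarrow> real) \<Rightarrow> (nat \<Rightarrow> real) \<Rightarrow> (int \<Rightarrow> nat \<Rightarrow> real)
    \<Rightarrow> nat \<Rightarrow> (nat \<Rightarrow> nat) \<Rightarrow> nat \<Rightarrow> real" where
  "joint_SY mx ms PX th1 b 0 ys s' = th1 s'"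
| "joint_SY mx ms PX th1 b (Suc n) ys s' =
     (\<Sum>s\<in>{0..ms}. \<Sum>x\<in>{0..mx}.
        if int s - int x + int (ys (Suc n)) = int s'
        then joint_SY mx ms PX th1 b n ys s * PX x * b (int s - int x) (ys (Suc n))
        else 0)"

definition prob_Y :: "nat \<Rightarrow> nat \<Rightarrow> (nat \<Rightarrow> real) \<Rightarrow> (nat \<Rightarrow> real) \<Rightarrow> (int \<Rightarrow> nat \<Rightarrow> real)
    \<Rightarrow> nat \<Rightarrow> (nat \<Rightarrow> nat) \<Rightarrow> real" where
  "prob_Y mx ms PX th1 b n ys = (\<Sum>s\<in>{0..ms}. joint_SY mx ms PX th1 b n ys s)"

text \<open>theta_{n+1}(s) = P(S_{n+1} = s | Y^n = ys).\<close>
definition theta :: "nat \<Rightarrow> nat \<Rightarrow> (nat \<Rightarrow> real) \<Rightarrow> (nat \<Rightarrow> real) \<Rightarrow> (int \<Rightarrow> nat \<Rightarrow> real)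
    \<Rightarrow> nat \<Rightarrow> (nat \<Rightarrow> nat) \<Rightarrow> nat \<Rightarrow> real" where
  "theta mx ms PX th1 b n ys s = joint_SY mx ms PX th1 b n ys s / prob_Y mx ms PX th1 b n ys"

text \<open>xi_{n+1}(w) = P(W_{n+1} = w | Y^n = ys); X_{n+1} is independent of (S_{n+1}, Y^n).\<close>
definition xi :: "nat \<Rightarrow> nat \<Rightarrow> (nat \<Rightarrow> real) \<Rightarrow> (nat \<Rightarrow> real) \<Rightarrow> (int \<Rightarrow> nat \<Rightarrow> real)
    \<Rightarrow> nat \<Rightarrow> (nat \<Rightarrow> nat) \<Rightarrow> int \<Rightarrow> real" where
  "xi mx ms PX th1 b n ys w =
     (\<Sum>s\<in>{0..ms}. \<Sum>x\<in>{0..mx}. if int s - int x = w then joint_SY mx ms PX th1 b n ys s * PX x else 0)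
     / prob_Y mx ms PX th1 b n ys"

definition xi1 :: "nat \<Rightarrow> nat \<Rightarrow> (nat \<Rightarrow> real) \<Rightarrow> (nat \<Rightarrow> real) \<Rightarrow> int \<Rightarrow> real" where
  "xi1 mx ms PX th1 w = (\<Sum>s\<in>{0..ms}. \<Sum>x\<in>{0..mx}. if int s - int x = w then PX x * th1 s else 0)"

definition invariant :: "nat \<Rightarrow> nat \<Rightarrow> nat \<Rightarrow> (nat \<Rightarrow> real) \<Rightarrow> (nat \<Rightarrow> real) \<Rightarrow> (int \<Rightarrow> nat \<Rightarrow> real) \<Rightarrow> bool" where
  "invariant mx my ms PX th1 b \<longleftrightarrow>
     (\<forall>n ys. (\<forall>i\<in>{1..n}. ys i \<le> my) \<and> prob_Y mx ms PX th1 b n ys > 0 \<longrightarrow>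
        (\<forall>s\<in>{0..ms}. theta mx ms PX th1 b n ys s = theta mx ms PX th1 b 0 ys s) \<and>
        (\<forall>w\<in>Wset mx ms. xi mx ms PX th1 b n ys w = xi1 mx ms PX th1 w))"

definition mutual_info :: "('a \<Rightarrow> 'c \<Rightarrow> real) \<Rightarrow> 'a set \<Rightarrow> 'c set \<Rightarrow> real" where
  "mutual_info p A C =
     (\<Sum>a\<in>A. \<Sum>c\<in>C. if p a c = 0 then 0
        else p a c * log 2 (p a c / ((\<Sum>c'\<in>C. p a c') * (\<Sum>a'\<in>A. p a' c))))"

end

theory Submission
  imports Defs
begin

text \<open>Both joint laws have the form \<open>p(w, c) = \<theta>\<^sub>1(w + c) R(c)\<close>: for the demand because
  \<open>S\<^sub>1 = W\<^sub>1 + X\<^sub>1\<close> with \<open>S\<^sub>1\<close> independent of \<open>X\<^sub>1\<close>, and for the output because invariance at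
  \<open>t = 2\<close> says that \<open>S\<^sub>2 = W\<^sub>1 + Y\<^sub>1\<close> has law \<open>\<theta>\<^sub>1\<close> given \<open>Y\<^sub>1 = y\<close>.
  For such a shift channel the law of \<open>W\<close> given \<open>C = c\<close> is a translate of \<open>\<theta>\<^sub>1\<close>, so
  \<open>I(W; C) = H(W) - H(\<theta>\<^sub>1)\<close>, and both sides equal \<open>H(\<xi>\<^sub>1) - H(\<theta>\<^sub>1)\<close>.\<close>

definition zero_ext :: "nat \<Rightarrow> (nat \<Rightarrow> real) \<Rightarrow> int \<Rightarrow> real" where
  "zero_ext ms th z = (if 0 \<le> z \<and> z \<le> int ms then th (nat z) else 0)"

lemma zero_ext_nonneg:
  assumes "is_pmf_on th {0..ms}"
  shows "zero_ext ms th z \<ge> 0"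
  using assms by (auto simp: zero_ext_def is_pmf_on_def)

lemma sum_if_eq_int_zero_ext:
  "(\<Sum>s\<in>{0..ms}. if z = int s then g s else 0) = zero_ext ms g z"
proof (cases "0 \<le> z \<and> z \<le> int ms")
  case True
  have "(\<Sum>s\<in>{0..ms}. if z = int s then g s else 0) = (\<Sum>s\<in>{0..ms}. if s = nat z then g s else 0)"
    by (intro sum.cong refl) (use True in auto)
  also have "\<dots> = g (nat z)" using True by (simp add: nat_le_iff)
  finally show ?thesis using True by (simp add: zero_ext_def)
next
  case False
  then show ?thesis by (auto simp: zero_ext_def intro!: sum.neutral)
qed

lemma sum_zero_ext_shift:
  fixes \<phi> :: "real \<Rightarrow> real"
  assumes "finite A" and "\<phi> 0 = 0"
  shows "(\<Sum>a\<in>A. \<phi> (zero_ext ms th (a + int c)))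
       = (\<Sum>s\<in>{s. s \<le> ms \<and> int s - int c \<in> A}. \<phi> (th s))"
proof -
  have "(\<Sum>a\<in>A. \<phi> (zero_ext ms th (a + int c)))
      = (\<Sum>a\<in>{a\<in>A. 0 \<le> a + int c \<and> a + int c \<le> int ms}. \<phi> (th (nat (a + int c))))"
    using assms by (intro sum.mono_neutral_cong_right) (auto simp: zero_ext_def)
  also have "\<dots> = (\<Sum>s\<in>{s. s \<le> ms \<and> int s - int c \<in> A}. \<phi> (th s))"
    by (rule sum.reindex_bij_witness[where i = "\<lambda>s. int s - int c" and j = "\<lambda>a. nat (a + int c)"])
       auto
  finally show ?thesis .
qed

lemma sum_zero_ext_shift_entropy:
  assumes "finite A" and th: "is_pmf_on th {0..ms}"
    and mass: "(\<Sum>a\<in>A. zero_ext ms th (a + int c)) = 1"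
  shows "(\<Sum>a\<in>A. zero_ext ms th (a + int c) * log 2 (zero_ext ms th (a + int c)))
       = (\<Sum>s\<in>{0..ms}. th s * log 2 (th s))"
proof -
  define S where "S = {s. s \<le> ms \<and> int s - int c \<in> A}"
  have S_sub: "S \<subseteq> {0..ms}" by (auto simp: S_def)
  have "sum th S = 1"
    using sum_zero_ext_shift[OF \<open>finite A\<close>, of id] mass by (simp add: S_def)
  moreover have "sum th {0..ms} = sum th S + sum th ({0..ms} - S)"
    using S_sub by (simp add: sum.subset_diff)
  ultimately have "sum th ({0..ms} - S) = 0" using th by (simp add: is_pmf_on_def)
  then have outside: "th s = 0" if "s \<in> {0..ms} - S" for s
    using that th sum_nonneg_eq_0_iff[of "{0..ms} - S" th] by (auto simp: is_pmf_on_def)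
  have "(\<Sum>a\<in>A. zero_ext ms th (a + int c) * log 2 (zero_ext ms th (a + int c)))
      = (\<Sum>s\<in>S. th s * log 2 (th s))"
    using sum_zero_ext_shift[OF \<open>finite A\<close>, of "\<lambda>t. t * log 2 t"] by (simp add: S_def)
  also have "\<dots> = (\<Sum>s\<in>{0..ms}. th s * log 2 (th s))"
    using S_sub outside by (intro sum.mono_neutral_left) auto
  finally show ?thesis .
qed

lemma mutual_info_factor:
  fixes p :: "int \<Rightarrow> nat \<Rightarrow> real"
  assumes fA: "finite A" and fC: "finite C"
    and peq: "\<And>a c. a \<in> A \<Longrightarrow> c \<in> C \<Longrightarrow> p a c = T (a + int c) * R c"
    and pnn: "\<And>a c. a \<in> A \<Longrightarrow> c \<in> C \<Longrightarrow> p a c \<ge> 0"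
    and Tnn: "\<And>z. T z \<ge> 0"
    and pC: "\<And>c. c \<in> C \<Longrightarrow> (\<Sum>a\<in>A. p a c) = R c"
  shows "mutual_info p A C = (\<Sum>a\<in>A. \<Sum>c\<in>C. p a c * log 2 (T (a + int c)))
      - (\<Sum>a\<in>A. (\<Sum>c\<in>C. p a c) * log 2 (\<Sum>c\<in>C. p a c))"
proof -
  have summand: "(if p a c = 0 then 0
        else p a c * log 2 (p a c / ((\<Sum>c'\<in>C. p a c') * (\<Sum>a'\<in>A. p a' c))))
     = p a c * log 2 (T (a + int c)) - p a c * log 2 (\<Sum>c'\<in>C. p a c')"
    if a: "a \<in> A" and c: "c \<in> C" for a c
  proof (cases "p a c = 0")
    case False
    then have pos: "p a c > 0" using pnn[OF a c] by linarith
    have "p a c \<le> (\<Sum>a'\<in>A. p a' c)"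
      by (rule member_le_sum[OF a]) (use pnn c fA in auto)
    then have Rpos: "R c > 0" using pos pC[OF c] by linarith
    then have Tpos: "T (a + int c) > 0"
      using pos peq[OF a c] Tnn[of "a + int c"] by (simp add: zero_less_mult_iff)
    have "p a c \<le> (\<Sum>c'\<in>C. p a c')"
      by (rule member_le_sum[OF c]) (use pnn a fC in auto)
    then have rowpos: "(\<Sum>c'\<in>C. p a c') > 0" using pos by linarith
    have "p a c / ((\<Sum>c'\<in>C. p a c') * (\<Sum>a'\<in>A. p a' c)) = T (a + int c) / (\<Sum>c'\<in>C. p a c')"
      using Rpos rowpos by (simp add: pC[OF c] peq[OF a c])
    then show ?thesis
      using False Tpos rowpos by (simp add: log_divide right_diff_distrib)
  qed simp
  have "mutual_info p A C = (\<Sum>a\<in>A. \<Sum>c\<in>C.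
          p a c * log 2 (T (a + int c)) - p a c * log 2 (\<Sum>c'\<in>C. p a c'))"
    unfolding mutual_info_def by (intro sum.cong refl) (simp add: summand)
  then show ?thesis by (simp add: sum_subtractf sum_distrib_right)
qed

lemma mutual_info_shift_channel:
  fixes p :: "int \<Rightarrow> nat \<Rightarrow> real"
  assumes fA: "finite A" and fC: "finite C" and th: "is_pmf_on th {0..ms}"
    and Rnn: "\<And>c. c \<in> C \<Longrightarrow> R c \<ge> 0" and R1: "sum R C = 1"
    and peq: "\<And>a c. a \<in> A \<Longrightarrow> c \<in> C \<Longrightarrow> p a c = zero_ext ms th (a + int c) * R c"
    and pC: "\<And>c. c \<in> C \<Longrightarrow> (\<Sum>a\<in>A. p a c) = R c"
  shows "mutual_info p A C = (\<Sum>s\<in>{0..ms}. th s * log 2 (th s))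
      - (\<Sum>a\<in>A. (\<Sum>c\<in>C. p a c) * log 2 (\<Sum>c\<in>C. p a c))"
proof -
  let ?T = "zero_ext ms th" and ?H = "\<Sum>s\<in>{0..ms}. th s * log 2 (th s)"
  have column: "R c * (\<Sum>a\<in>A. ?T (a + int c) * log 2 (?T (a + int c))) = R c * ?H"
    if c: "c \<in> C" for c
  proof (cases "R c = 0")
    case False
    have "R c * (\<Sum>a\<in>A. ?T (a + int c)) = R c * 1"
      using pC[OF c] peq c by (simp add: sum_distrib_left mult.commute)
    then have "(\<Sum>a\<in>A. ?T (a + int c)) = 1" using False by simp
    then show ?thesis using sum_zero_ext_shift_entropy[OF fA th] by simp
  qed simp
  have "(\<Sum>a\<in>A. \<Sum>c\<in>C. p a c * log 2 (?T (a + int c)))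
      = (\<Sum>c\<in>C. R c * (\<Sum>a\<in>A. ?T (a + int c) * log 2 (?T (a + int c))))"
    by (subst sum.swap) (simp add: peq sum_distrib_left mult_ac)
  also have "\<dots> = ?H"
    using R1 by (simp add: column sum_distrib_right[symmetric])
  finally show ?thesis
    using mutual_info_factor[OF fA fC peq _ zero_ext_nonneg[OF th] pC]
    by (simp add: peq Rnn zero_ext_nonneg[OF th])
qed

lemma finite_Wset: "finite (Wset mx ms)"
proof -
  have "Wset mx ms = (\<lambda>(s, x). int s - int x) ` ({0..ms} \<times> {0..mx})"
    unfolding Wset_def by fastforce
  then show ?thesis by simp
qed

lemma diff_mem_Wset: "s \<le> ms \<Longrightarrow> x \<le> mx \<Longrightarrow> int s - int x \<in> Wset mx ms"
  unfolding Wset_def by auto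

lemma Bset_nonneg: "b \<in> Bset mx my ms \<Longrightarrow> w \<in> Wset mx ms \<Longrightarrow> y \<le> my \<Longrightarrow> b w y \<ge> 0"
  by (auto simp: Bset_def is_pmf_on_def)

lemma Bset_sum: "b \<in> Bset mx my ms \<Longrightarrow> w \<in> Wset mx ms \<Longrightarrow> (\<Sum>y\<in>{0..my}. b w y) = 1"
  by (auto simp: Bset_def is_pmf_on_def)

lemma Bset_vanishes_outside:
  assumes b: "b \<in> Bset mx my ms" and w: "w \<in> Wset mx ms" and y: "y \<le> my"
    and out: "\<not> (0 \<le> w + int y \<and> w + int y \<le> int ms)"
  shows "b w y = 0"
proof -
  have sub: "Yo my ms w \<subseteq> {0..my}" by (auto simp: Yo_def)
  have "sum (b w) {0..my} = sum (b w) ({0..my} - Yo my ms w) + sum (b w) (Yo my ms w)"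
    using sub by (simp add: sum.subset_diff)
  then have "sum (b w) ({0..my} - Yo my ms w) = 0"
    using b w by (simp add: Bset_def is_pmf_on_def)
  moreover have "y \<in> {0..my} - Yo my ms w" using y out by (auto simp: Yo_def)
  ultimately show ?thesis
    using Bset_nonneg[OF b w] sum_nonneg_eq_0_iff[of "{0..my} - Yo my ms w" "b w"] by auto
qed

lemma xi1_nonneg:
  "is_pmf_on PX {0..mx} \<Longrightarrow> is_pmf_on th1 {0..ms} \<Longrightarrow> xi1 mx ms PX th1 w \<ge> 0"
  unfolding xi1_def by (intro sum_nonneg) (auto simp: is_pmf_on_def)

lemma sum_Wset_xi1_mult:
  "(\<Sum>w\<in>Wset mx ms. xi1 mx ms PX th1 w * f w)
     = (\<Sum>s\<in>{0..ms}. \<Sum>x\<in>{0..mx}. PX x * th1 s * f (int s - int x))"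
proof -
  have "(\<Sum>w\<in>Wset mx ms. xi1 mx ms PX th1 w * f w)
      = (\<Sum>w\<in>Wset mx ms. \<Sum>s\<in>{0..ms}. \<Sum>x\<in>{0..mx}.
           if int s - int x = w then PX x * th1 s * f w else 0)"
    unfolding xi1_def sum_distrib_right by (intro sum.cong refl) simp
  also have "\<dots> = (\<Sum>s\<in>{0..ms}. \<Sum>x\<in>{0..mx}. \<Sum>w\<in>Wset mx ms.
           if int s - int x = w then PX x * th1 s * f w else 0)"
    by (subst sum.swap) (simp add: sum.swap[of _ "Wset mx ms"])
  finally show ?thesis by (simp add: finite_Wset diff_mem_Wset)
qed

lemma sum_xi1:
  assumes "is_pmf_on PX {0..mx}" and "is_pmf_on th1 {0..ms}"
  shows "(\<Sum>w\<in>Wset mx ms. xi1 mx ms PX th1 w) = 1"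
  using sum_Wset_xi1_mult[of mx ms PX th1 "\<lambda>_. 1"] assms
  by (simp add: is_pmf_on_def sum_distrib_left[symmetric] sum_distrib_right[symmetric])

lemma joint_SY_one:
  assumes "0 \<le> w + int y"
  shows "joint_SY mx ms PX th1 b (Suc 0) (\<lambda>_. y) (nat (w + int y)) = xi1 mx ms PX th1 w * b w y"
proof -
  have "joint_SY mx ms PX th1 b (Suc 0) (\<lambda>_. y) (nat (w + int y))
      = (\<Sum>s\<in>{0..ms}. \<Sum>x\<in>{0..mx}.
           if int s - int x + int y = w + int y then th1 s * PX x * b (int s - int x) y else 0)"
    using assms by (simp only: joint_SY.simps int_nat_eq if_True)
  also have "\<dots> = (\<Sum>s\<in>{0..ms}. \<Sum>x\<in>{0..mx}.
           if int s - int x = w then PX x * th1 s * b w y else 0)"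
    by (intro sum.cong refl) auto
  also have "\<dots> = xi1 mx ms PX th1 w * b w y"
    unfolding xi1_def sum_distrib_right by (intro sum.cong refl) simp
  finally show ?thesis .
qed

lemma prob_Y_zero:
  "is_pmf_on th1 {0..ms} \<Longrightarrow> prob_Y mx ms PX th1 b 0 ys = 1"
  by (simp add: prob_Y_def is_pmf_on_def)

lemma prob_Y_one:
  assumes b: "b \<in> Bset mx my ms" and y: "y \<le> my"
  shows "prob_Y mx ms PX th1 b (Suc 0) (\<lambda>_. y) = (\<Sum>w\<in>Wset mx ms. xi1 mx ms PX th1 w * b w y)"
proof -
  have "prob_Y mx ms PX th1 b (Suc 0) (\<lambda>_. y)
      = (\<Sum>s\<in>{0..ms}. \<Sum>x\<in>{0..mx}.
           zero_ext ms (\<lambda>_. th1 s * PX x * b (int s - int x) y) (int s - int x + int y))"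
    unfolding prob_Y_def joint_SY.simps sum_if_eq_int_zero_ext[symmetric]
    by (subst sum.swap) (simp add: sum.swap[of _ "{0..ms}" "{0..mx}"])
  also have "\<dots> = (\<Sum>s\<in>{0..ms}. \<Sum>x\<in>{0..mx}. PX x * th1 s * b (int s - int x) y)"
    using b y by (intro sum.cong refl) (auto simp: zero_ext_def intro: Bset_vanishes_outside diff_mem_Wset)
  finally show ?thesis by (simp add: sum_Wset_xi1_mult)
qed

lemma invariant_joint_factor:
  assumes PX: "is_pmf_on PX {0..mx}" and th1: "is_pmf_on th1 {0..ms}"
    and b: "b \<in> Bset mx my ms" and inv: "invariant mx my ms PX th1 b"
    and w: "w \<in> Wset mx ms" and y: "y \<le> my"
  shows "xi1 mx ms PX th1 w * b w y
       = zero_ext ms th1 (w + int y) * (\<Sum>w'\<in>Wset mx ms. xi1 mx ms PX th1 w' * b w' y)"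
proof -
  define r where "r = (\<Sum>w'\<in>Wset mx ms. xi1 mx ms PX th1 w' * b w' y)"
  have nonneg: "xi1 mx ms PX th1 w' * b w' y \<ge> 0" if "w' \<in> Wset mx ms" for w'
    using that xi1_nonneg[OF PX th1] Bset_nonneg[OF b _ y] by simp
  show ?thesis
  proof (cases "r = 0")
    case True
    then show ?thesis
      using w sum_nonneg_eq_0_iff[OF finite_Wset nonneg] by (auto simp: r_def)
  next
    case False
    then have rpos: "r > 0" using nonneg by (simp add: r_def order_less_le sum_nonneg)
    have "\<forall>s\<in>{0..ms}. theta mx ms PX th1 b (Suc 0) (\<lambda>_. y) s = theta mx ms PX th1 b 0 (\<lambda>_. y) s"
      using inv y rpos prob_Y_one[OF b y] unfolding invariant_def r_def by auto
    then have stationary: "joint_SY mx ms PX th1 b (Suc 0) (\<lambda>_. y) s = th1 s * r" if "s \<le> ms" for s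
      using that rpos prob_Y_one[OF b y] prob_Y_zero[OF th1]
      by (auto simp: theta_def r_def field_simps)
    show ?thesis
    proof (cases "0 \<le> w + int y \<and> w + int y \<le> int ms")
      case True
      then show ?thesis
        using joint_SY_one[of w y] stationary[of "nat (w + int y)"]
        by (simp add: zero_ext_def r_def nat_le_iff)
    next
      case False
      then show ?thesis using Bset_vanishes_outside[OF b w y] by (auto simp: zero_ext_def)
    qed
  qed
qed

lemma mutual_info_W_X:
  assumes PX: "is_pmf_on PX {0..mx}" and th1: "is_pmf_on th1 {0..ms}"
  shows "mutual_info (\<lambda>w x. \<Sum>s\<in>{0..ms}. if int s - int x = w then th1 s * PX x else 0)
           (Wset mx ms) {0..mx}
       = (\<Sum>s\<in>{0..ms}. th1 s * log 2 (th1 s))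
         - (\<Sum>w\<in>Wset mx ms. xi1 mx ms PX th1 w * log 2 (xi1 mx ms PX th1 w))"
proof -
  define p where "p = (\<lambda>w x. \<Sum>s\<in>{0..ms}. if int s - int x = w then th1 s * PX x else 0)"
  have factor: "p w x = zero_ext ms th1 (w + int x) * PX x" for w x
  proof -
    have "p w x = (\<Sum>s\<in>{0..ms}. if w + int x = int s then th1 s * PX x else 0)"
      unfolding p_def by (intro sum.cong refl) auto
    then show ?thesis by (simp add: sum_if_eq_int_zero_ext zero_ext_def)
  qed
  have column: "(\<Sum>w\<in>Wset mx ms. p w x) = PX x" if "x \<in> {0..mx}" for x
  proof -
    have "(\<Sum>w\<in>Wset mx ms. p w x) = (\<Sum>s\<in>{0..ms}. th1 s * PX x)"
      unfolding p_def using that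
      by (subst sum.swap) (simp add: finite_Wset diff_mem_Wset)
    then show ?thesis using th1 by (simp add: is_pmf_on_def sum_distrib_right[symmetric])
  qed
  have row: "(\<Sum>x\<in>{0..mx}. p w x) = xi1 mx ms PX th1 w" for w
    unfolding p_def xi1_def by (subst sum.swap) (auto simp: mult.commute intro!: sum.cong)
  have "mutual_info p (Wset mx ms) {0..mx}
      = (\<Sum>s\<in>{0..ms}. th1 s * log 2 (th1 s))
        - (\<Sum>w\<in>Wset mx ms. (\<Sum>x\<in>{0..mx}. p w x) * log 2 (\<Sum>x\<in>{0..mx}. p w x))"
    using PX unfolding is_pmf_on_def
    by (intro mutual_info_shift_channel[OF finite_Wset finite_atLeastAtMost th1 _ _ factor column]) auto
  then show ?thesis using row by (simp add: p_def)
qed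

lemma mutual_info_W_Y:
  assumes PX: "is_pmf_on PX {0..mx}" and th1: "is_pmf_on th1 {0..ms}"
    and b: "b \<in> Bset mx my ms" and inv: "invariant mx my ms PX th1 b"
  shows "mutual_info (\<lambda>w y. xi1 mx ms PX th1 w * b w y) (Wset mx ms) {0..my}
       = (\<Sum>s\<in>{0..ms}. th1 s * log 2 (th1 s))
         - (\<Sum>w\<in>Wset mx ms. xi1 mx ms PX th1 w * log 2 (xi1 mx ms PX th1 w))"
proof -
  define r where "r = (\<lambda>y. \<Sum>w\<in>Wset mx ms. xi1 mx ms PX th1 w * b w y)"
  have row: "(\<Sum>y\<in>{0..my}. xi1 mx ms PX th1 w * b w y) = xi1 mx ms PX th1 w"
    if "w \<in> Wset mx ms" for w
    using Bset_sum[OF b that] by (simp add: sum_distrib_left[symmetric])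
  have mass: "sum r {0..my} = 1"
    unfolding r_def by (subst sum.swap) (simp add: row sum_xi1[OF PX th1])
  have nonneg: "r y \<ge> 0" if "y \<in> {0..my}" for y
    unfolding r_def using that xi1_nonneg[OF PX th1] Bset_nonneg[OF b]
    by (intro sum_nonneg) auto
  have factor: "xi1 mx ms PX th1 w * b w y = zero_ext ms th1 (w + int y) * r y"
    if "w \<in> Wset mx ms" and "y \<in> {0..my}" for w y
    using invariant_joint_factor[OF PX th1 b inv] that by (simp add: r_def)
  have "mutual_info (\<lambda>w y. xi1 mx ms PX th1 w * b w y) (Wset mx ms) {0..my}
      = (\<Sum>s\<in>{0..ms}. th1 s * log 2 (th1 s))
        - (\<Sum>w\<in>Wset mx ms. (\<Sum>y\<in>{0..my}. xi1 mx ms PX th1 w * b w y)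
             * log 2 (\<Sum>y\<in>{0..my}. xi1 mx ms PX th1 w * b w y))"
    by (rule mutual_info_shift_channel[OF finite_Wset finite_atLeastAtMost th1 nonneg mass factor])
      (simp_all add: r_def)
  then show ?thesis by (simp add: row)
qed

theorem lemma7:
  fixes mx my ms :: nat and PX th1 :: "nat \<Rightarrow> real" and b :: "int \<Rightarrow> nat \<Rightarrow> real"
  assumes "mx \<le> my"
    and "is_pmf_on PX {0..mx}"
    and "is_pmf_on th1 {0..ms}"
    and "b \<in> Bset mx my ms"
    and "invariant mx my ms PX th1 b"
  shows "mutual_info (\<lambda>w y. xi1 mx ms PX th1 w * b w y) (Wset mx ms) {0..my}
       = mutual_info (\<lambda>w x. \<Sum>s\<in>{0..ms}. if int s - int x = w then th1 s * PX x else 0)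
           (Wset mx ms) {0..mx}"
  using mutual_info_W_Y[OF assms(2-5)] mutual_info_W_X[OF assms(2,3)] by simp

end
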